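(* Let $\alpha>0$ and $\kappa>0$ be given, and for $n\ge 0$ set $\rho_{\kappa n}=\max\bigl(\tfrac12,\,1-\tfrac{\kappa}{n+1}\bigr)$. Let $(\delta_{nj})_{n\ge 0,\,0\le j\le n}$ be a triangular family of real numbers with $\sup_{n,j}|\delta_{nj}|<\tfrac12$. For $n\ge 0$ and $|z|=1$ define $R_n(z)>0$ by \[ \Bigl|\prod_{j=0}^{n}\bigl(z-\rho_{\kappa n}e^{\frac{2\pi i (j+\alpha\delta_{nj})}{n+1}}\bigr)\Bigr| = R_n(z)\,\Bigl|\prod_{j=0}^{n}\bigl(z-\rho_{\kappa n}e^{\frac{2\pi i (j+\delta_{nj})}{n+1}}\bigr)\Bigr|^{\alpha}. \] Then there exist constants $0<c\le C<\infty$ such that $c\le R_n(z)\le C$ for all $z$ on the unit circle $\mathbb{T}$ and all $n\ge 0$. *)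

theory Defs
  imports Complex_Main
begin

definition rho :: "real \<Rightarrow> nat \<Rightarrow> real" where
  "rho \<kappa> n = max (1/2) (1 - \<kappa> / (real n + 1))"

definition Pnod :: "real \<Rightarrow> real \<Rightarrow> (nat \<Rightarrow> nat \<Rightarrow> real) \<Rightarrow> nat \<Rightarrow> complex \<Rightarrow> complex" where
  "Pnod \<kappa> a \<delta> n z =
     (\<Prod>j=0..n. z - complex_of_real (rho \<kappa> n) *
        exp (complex_of_real (2 * pi * (real j + a * \<delta> n j) / (real n + 1)) * \<i>))"

definition Rfun :: "real \<Rightarrow> real \<Rightarrow> (nat \<Rightarrow> nat \<Rightarrow> real) \<Rightarrow> nat \<Rightarrow> complex \<Rightarrow> real" where
  "Rfun \<alpha> \<kappa> \<delta> n z = cmod (Pnod \<kappa> \<alpha> \<delta> n z) / (cmod (Pnod \<kappa> 1 \<delta> n z) powr \<alpha>)"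

end

theory Submission
  imports Defs "HOL-Analysis.Summation_Tests" "HOL-Computational_Algebra.Fundamental_Theorem_Algebra"
begin

(* Write N = n + 1, \<rho> = rho \<kappa> n and z = cis \<phi>. Node j of Pnod with parameter a
   has angle 2\<pi>j/N + a s_j, where s_j = 2\<pi>\<delta>_nj/N, and its factor has modulus
   sqrt (chord_sq \<rho> (\<phi> - 2\<pi>j/N - a s_j)). With F_j(t) = ln chord_sq \<rho> (\<phi> - 2\<pi>j/N - t) / 2,
     ln R_n(z) = \<Sum>_j [F_j(\<alpha> s_j) - \<alpha> F_j(s_j) - (1 - \<alpha>) F_j(0)] + (1 - \<alpha>) ln |z^N - \<rho>^N|,
   because the unperturbed nodes (a = 0) are the N-th roots of \<rho>^N.
   The last term is bounded since \<rho>^N \<le> max (1/2) (e^-\<kappa>) < 1. Each bracket is a second-order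
   Taylor defect, bounded by a constant times s_j^2 over a lower bound for the chord near node j.
   Since 1 - \<rho> \<ge> min (1/2) \<kappa> / N and s_j = O(1/N), the bracket is O(w_j^-2), where w_j is the
   lattice distance between N\<phi>/2\<pi> and the nearest integer congruent to j mod N. Distinct nodes
   use distinct integers, so the total is dominated by a convergent series, uniformly in n, z. *)

(* chord_sq \<rho> w is the squared distance |1 - \<rho> e^{iw}|^2 between a point of the unit
   circle and a point of radius \<rho> whose arguments differ by w. *)
definition chord_sq :: "real \<Rightarrow> real \<Rightarrow> real" where
  "chord_sq \<rho> w = 1 + \<rho>\<^sup>2 - 2 * \<rho> * cos w"

lemma norm_cis_diff: "cmod (cis \<phi> - of_real \<rho> * cis \<psi>) = sqrt (chord_sq \<rho> (\<phi> - \<psi>))"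
proof -
  have "(cmod (cis \<phi> - of_real \<rho> * cis \<psi>))\<^sup>2 = (cos \<phi> - \<rho> * cos \<psi>)\<^sup>2 + (sin \<phi> - \<rho> * sin \<psi>)\<^sup>2"
    by (simp add: cmod_power2)
  also have "\<dots> = ((cos \<phi>)\<^sup>2 + (sin \<phi>)\<^sup>2) + \<rho>\<^sup>2 * ((cos \<psi>)\<^sup>2 + (sin \<psi>)\<^sup>2)
                   - 2 * \<rho> * (cos \<phi> * cos \<psi> + sin \<phi> * sin \<psi>)"
    by algebra
  also have "\<dots> = chord_sq \<rho> (\<phi> - \<psi>)" by (simp add: chord_sq_def cos_diff)
  finally show ?thesis by (metis norm_ge_zero real_sqrt_unique)
qed

lemma chord_sq_sin: "chord_sq \<rho> w = (1 - \<rho>)\<^sup>2 + 4 * \<rho> * (sin (w / 2))\<^sup>2"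
proof -
  have c: "cos w = 1 - 2 * (sin (w / 2))\<^sup>2" using cos_double_sin[of "w / 2"] by simp
  show ?thesis unfolding chord_sq_def c by (simp add: power2_eq_square algebra_simps)
qed

lemma chord_sq_pos: "0 \<le> \<rho> \<Longrightarrow> \<rho> < 1 \<Longrightarrow> 0 < chord_sq \<rho> w"
  unfolding chord_sq_sin by (simp add: add_pos_nonneg)

lemma chord_sq_periodic: "chord_sq \<rho> (w + 2 * pi * of_int k) = chord_sq \<rho> w"
  by (simp add: chord_sq_def cos_add)

(* First and second derivative of F(t) = ln (chord_sq \<rho> (v - t)) / 2, i.e. of
   ln |z - \<rho> e^{i(\<theta> + t)}| as the node angle is perturbed by t. *)
lemma has_derivative_log_chord_sq:
  assumes "0 \<le> \<rho>" "\<rho> < 1"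
  shows "((\<lambda>t. ln (chord_sq \<rho> (v - t)) / 2) has_real_derivative
           - \<rho> * sin (v - t) / chord_sq \<rho> (v - t)) (at t)"
  using chord_sq_pos[OF assms, of "v - t"]
  unfolding chord_sq_def by (auto intro!: derivative_eq_intros simp: field_simps)

lemma has_second_derivative_log_chord_sq:
  assumes "0 \<le> \<rho>" "\<rho> < 1"
  shows "((\<lambda>t. - \<rho> * sin (v - t) / chord_sq \<rho> (v - t)) has_real_derivative
     (\<rho> * cos (v - t) * chord_sq \<rho> (v - t) - 2 * \<rho>\<^sup>2 * (sin (v - t))\<^sup>2) / (chord_sq \<rho> (v - t))\<^sup>2) (at t)"
proof -
  have "1 + \<rho>\<^sup>2 - 2 * \<rho> * cos (v - t) \<noteq> 0"
    using chord_sq_pos[OF assms, of "v - t"] by (simp add: chord_sq_def)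
  then show ?thesis
    unfolding chord_sq_def
    by (auto intro!: derivative_eq_intros simp: power2_eq_square) (simp add: divide_simps algebra_simps)
qed

(* The second derivative of F is at most 3 / chord_sq in absolute value; hence F is
   nearly affine wherever the chord stays long compared with the perturbation. *)
lemma second_derivative_log_chord_sq_bound:
  assumes r: "0 \<le> \<rho>" "\<rho> < 1"
  shows "\<bar>(\<rho> * cos w * chord_sq \<rho> w - 2 * \<rho>\<^sup>2 * (sin w)\<^sup>2) / (chord_sq \<rho> w)\<^sup>2\<bar> \<le> 3 / chord_sq \<rho> w"
proof -
  define D where "D = chord_sq \<rho> w"
  have D: "0 < D" unfolding D_def using chord_sq_pos[OF r] .
  have sin_sq: "(sin w)\<^sup>2 \<le> 2 * (1 - cos w)"
  proof -
    have "(sin w)\<^sup>2 = (1 - cos w) * (1 + cos w)" by (simp add: sin_squared_eq power2_eq_square algebra_simps)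
    also have "\<dots> \<le> (1 - cos w) * 2" using cos_le_one[of w] by (intro mult_left_mono) auto
    finally show ?thesis by simp
  qed
  have "D = (1 - \<rho>)\<^sup>2 + 2 * \<rho> * (1 - cos w)" by (simp add: D_def chord_sq_def power2_eq_square algebra_simps)
  then have "2 * \<rho> * (1 - cos w) \<le> D" by simp
  moreover have "\<rho> * (sin w)\<^sup>2 \<le> \<rho> * (2 * (1 - cos w))" using sin_sq r by (intro mult_left_mono) auto
  ultimately have sin_D: "\<rho> * (sin w)\<^sup>2 \<le> D" by (simp add: algebra_simps)
  have "\<bar>\<rho> * cos w * D\<bar> = \<rho> * \<bar>cos w\<bar> * D" using r D by (simp add: abs_mult)
  also have "\<dots> \<le> \<rho> * 1 * D"
    using r D abs_cos_le_one[of w] by (intro mult_right_mono mult_left_mono) auto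
  finally have "\<bar>\<rho> * cos w * D\<bar> \<le> \<rho> * D" by simp
  moreover have "\<bar>2 * \<rho>\<^sup>2 * (sin w)\<^sup>2\<bar> \<le> 2 * \<rho> * D"
    using sin_D r by (simp add: power2_eq_square mult.assoc mult_left_mono)
  moreover have "\<rho> * D + 2 * \<rho> * D \<le> 3 * D" using r D by simp
  ultimately have "\<bar>\<rho> * cos w * D - 2 * \<rho>\<^sup>2 * (sin w)\<^sup>2\<bar> \<le> 3 * D" by linarith
  then have "\<bar>\<rho> * cos w * D - 2 * \<rho>\<^sup>2 * (sin w)\<^sup>2\<bar> / D\<^sup>2 \<le> 3 * D / D\<^sup>2"
    using D by (simp add: divide_right_mono)
  then show ?thesis using D by (simp add: D_def[symmetric] power2_eq_square abs_div)
qed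

lemma mvt_bound:
  fixes f f' :: "real \<Rightarrow> real"
  assumes d: "\<And>s. \<bar>s\<bar> \<le> \<bar>t\<bar> \<Longrightarrow> (f has_real_derivative f' s) (at s)"
    and b: "\<And>s. \<bar>s\<bar> \<le> \<bar>t\<bar> \<Longrightarrow> \<bar>f' s\<bar> \<le> B"
  shows "\<bar>f t - f 0\<bar> \<le> B * \<bar>t\<bar>"
proof (cases "0 \<le> t")
  case True
  show ?thesis
  proof (cases "t = 0")
    case False
    then obtain \<xi> where \<xi>: "0 < \<xi>" "\<xi> < t" "f t - f 0 = (t - 0) * f' \<xi>"
      using MVT2[of 0 t f f'] d True by force
    have "\<bar>f' \<xi>\<bar> \<le> B" using b \<xi> by auto
    then show ?thesis using \<xi> by (simp add: abs_mult mult.commute mult_left_mono)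
  qed simp
next
  case False
  then obtain \<xi> where \<xi>: "t < \<xi>" "\<xi> < 0" "f 0 - f t = (0 - t) * f' \<xi>"
    using MVT2[of t 0 f f'] d by force
  have "\<bar>f' \<xi>\<bar> \<le> B" using b \<xi> by auto
  then have "\<bar>f 0 - f t\<bar> \<le> B * \<bar>t\<bar>" using \<xi> False by (simp add: abs_mult mult.commute mult_left_mono)
  then show ?thesis by simp
qed

lemma taylor_remainder_bound:
  fixes F F1 F2 :: "real \<Rightarrow> real"
  assumes d1: "\<And>t. (F has_real_derivative F1 t) (at t)"
    and d2: "\<And>t. (F1 has_real_derivative F2 t) (at t)"
    and bd: "\<And>t. \<bar>t\<bar> \<le> \<bar>a\<bar> \<Longrightarrow> \<bar>F2 t\<bar> \<le> K"
  shows "\<bar>F a - F 0 - a * F1 0\<bar> \<le> K * a\<^sup>2"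
proof -
  have K: "0 \<le> K" using bd[of 0] by simp
  have dh: "((\<lambda>t. F t - t * F1 0) has_real_derivative (F1 s - F1 0)) (at s)" for s
    using d1[of s] by (auto intro!: derivative_eq_intros)
  have "\<bar>(F a - a * F1 0) - (F 0 - 0 * F1 0)\<bar> \<le> (K * \<bar>a\<bar>) * \<bar>a\<bar>"
  proof (rule mvt_bound[where f = "\<lambda>t. F t - t * F1 0", OF dh])
    fix s assume s: "\<bar>s\<bar> \<le> \<bar>a\<bar>"
    have "\<bar>F1 s - F1 0\<bar> \<le> K * \<bar>s\<bar>"
      by (rule mvt_bound[OF d2]) (use bd s in auto)
    also have "\<dots> \<le> K * \<bar>a\<bar>" using K s by (simp add: mult_left_mono)
    finally show "\<bar>F1 s - F1 0\<bar> \<le> K * \<bar>a\<bar>" .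
  qed
  then show ?thesis by (simp add: power2_eq_square algebra_simps)
qed

(* The "convexity defect" F(\<alpha> s) - \<alpha> F(s) - (1 - \<alpha>) F(0) vanishes for affine F; for F with
   |F''| \<le> K it is O(s^2): subtract the two Taylor expansions at 0, the linear terms cancel. *)
lemma convexity_defect_bound:
  fixes F F1 F2 :: "real \<Rightarrow> real"
  assumes d1: "\<And>t. (F has_real_derivative F1 t) (at t)"
    and d2: "\<And>t. (F1 has_real_derivative F2 t) (at t)"
    and bd: "\<And>t. \<bar>t\<bar> \<le> max \<alpha> 1 * \<bar>s\<bar> \<Longrightarrow> \<bar>F2 t\<bar> \<le> K"
    and \<alpha>: "0 < \<alpha>"
  shows "\<bar>F (\<alpha> * s) - \<alpha> * F s - (1 - \<alpha>) * F 0\<bar> \<le> K * (\<alpha>\<^sup>2 + \<alpha>) * s\<^sup>2"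
proof -
  have within: "c * \<bar>s\<bar> \<le> max \<alpha> 1 * \<bar>s\<bar>" if "c \<le> max \<alpha> 1" for c
    using that by (simp add: mult_right_mono)
  have rem_\<alpha>: "\<bar>F (\<alpha> * s) - F 0 - (\<alpha> * s) * F1 0\<bar> \<le> K * (\<alpha> * s)\<^sup>2"
    by (rule taylor_remainder_bound[OF d1 d2 bd]) (use \<alpha> within[of \<alpha>] in \<open>auto simp: abs_mult\<close>)
  have rem_1: "\<bar>F s - F 0 - s * F1 0\<bar> \<le> K * s\<^sup>2"
    by (rule taylor_remainder_bound[OF d1 d2 bd]) (use within[of 1] in auto)
  have "F (\<alpha> * s) - \<alpha> * F s - (1 - \<alpha>) * F 0
      = (F (\<alpha> * s) - F 0 - (\<alpha> * s) * F1 0) - \<alpha> * (F s - F 0 - s * F1 0)"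
    by (simp add: algebra_simps)
  moreover have "\<bar>\<alpha> * (F s - F 0 - s * F1 0)\<bar> \<le> \<alpha> * (K * s\<^sup>2)"
    using rem_1 \<alpha> by (simp add: abs_mult mult_left_mono)
  ultimately have "\<bar>F (\<alpha> * s) - \<alpha> * F s - (1 - \<alpha>) * F 0\<bar> \<le> K * (\<alpha> * s)\<^sup>2 + \<alpha> * (K * s\<^sup>2)"
    using rem_\<alpha> by linarith
  also have "\<dots> = K * (\<alpha>\<^sup>2 + \<alpha>) * s\<^sup>2" by (simp add: power2_eq_square algebra_simps)
  finally show ?thesis .
qed

(* The defect of the log-chord function, given a lower bound L for the chord along the
   perturbation interval. This is the error made by one node in ln R_n(z). *)
lemma log_chord_defect_bound:
  assumes r: "0 \<le> \<rho>" "\<rho> < 1" and \<alpha>: "0 < \<alpha>" and L: "0 < L"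
    and lower: "\<And>t. \<bar>t\<bar> \<le> max \<alpha> 1 * \<bar>s\<bar> \<Longrightarrow> L \<le> chord_sq \<rho> (v - t)"
  shows "\<bar>ln (chord_sq \<rho> (v - \<alpha> * s)) / 2 - \<alpha> * (ln (chord_sq \<rho> (v - s)) / 2)
           - (1 - \<alpha>) * (ln (chord_sq \<rho> (v - 0)) / 2)\<bar> \<le> 3 * (\<alpha>\<^sup>2 + \<alpha>) * s\<^sup>2 / L"
proof -
  have "\<bar>(\<rho> * cos (v - t) * chord_sq \<rho> (v - t) - 2 * \<rho>\<^sup>2 * (sin (v - t))\<^sup>2) / (chord_sq \<rho> (v - t))\<^sup>2\<bar>
        \<le> 3 / L" if "\<bar>t\<bar> \<le> max \<alpha> 1 * \<bar>s\<bar>" for t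
    using second_derivative_log_chord_sq_bound[OF r, of "v - t"] lower[OF that] L
    by (meson frac_le order_trans zero_le_numeral order_refl)
  from convexity_defect_bound[OF has_derivative_log_chord_sq[OF r]
      has_second_derivative_log_chord_sq[OF r] this \<alpha>]
  show ?thesis by simp
qed

lemma abs_sin_ge_third:
  fixes y :: real assumes "\<bar>y\<bar> \<le> 2"
  shows "\<bar>y\<bar> / 3 \<le> \<bar>sin y\<bar>"
proof -
  have taylor: "\<bar>sin y - y\<bar> \<le> \<bar>y\<bar> ^ 3 / 6"
    using Maclaurin_sin_bound[of y 3]
    by (simp add: lessThan_nat_numeral sin_coeff_def fact_numeral field_simps)
  have "\<bar>y\<bar> ^ 3 = \<bar>y\<bar> * \<bar>y\<bar>\<^sup>2" by (simp add: power3_eq_cube power2_eq_square)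
  also have "\<dots> \<le> \<bar>y\<bar> * 2\<^sup>2"
    using assms by (intro mult_left_mono power_mono) auto
  finally have "\<bar>y\<bar> ^ 3 / 6 \<le> 2 * \<bar>y\<bar> / 3" by simp
  with taylor show ?thesis by linarith
qed

lemma sin_lipschitz: "\<bar>sin (y - u) - sin y\<bar> \<le> \<bar>u\<bar>" for y u :: real
proof -
  have "\<bar>sin (y + - u) - sin (y + 0)\<bar> \<le> 1 * \<bar>- u\<bar>"
    by (rule mvt_bound[where f = "\<lambda>r. sin (y + r)" and f' = "\<lambda>r. cos (y + r)"])
       (auto intro!: derivative_eq_intros)
  then show ?thesis by simp
qed

(* Lower bound for the chord at angle 2\<pi>y/N - t when the radius satisfies \<rho> \<le> 1 - m0/N and the
   perturbation is at most \<beta>\<pi>/N: it is of order (m0^2 + (|y| - 3\<beta>/2)_+^2) / N^2. Here y is the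
   signed distance of the evaluation point to the node, measured in units of the node spacing. *)
lemma chord_sq_lattice_lower:
  fixes \<rho> N m0 \<beta> t y :: real
  assumes r: "1/2 \<le> \<rho>" "\<rho> < 1" and N: "0 < N" and m0: "0 \<le> m0" "m0 \<le> N * (1 - \<rho>)"
    and t: "\<bar>t\<bar> \<le> \<beta> * pi / N" and y: "\<bar>y\<bar> \<le> N / 2"
  shows "(m0\<^sup>2 + (max 0 (\<bar>y\<bar> - 3 * \<beta> / 2))\<^sup>2 / 2) / N\<^sup>2 \<le> chord_sq \<rho> (2 * pi * y / N - t)"
proof -
  define Y where "Y = pi * y / N"
  have Y: "\<bar>Y\<bar> = pi * \<bar>y\<bar> / N" using N by (simp add: Y_def abs_mult)
  have "\<bar>Y\<bar> \<le> pi / 2" using y N unfolding Y by (simp add: field_simps)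
  then have Y2: "\<bar>Y\<bar> \<le> 2" using pi_half_less_two by linarith
  have half: "(2 * pi * y / N - t) / 2 = Y - t / 2" by (simp add: Y_def)
  have "\<bar>Y\<bar> / 3 - \<bar>t\<bar> / 2 \<le> \<bar>sin (Y - t / 2)\<bar>"
    using abs_sin_ge_third[OF Y2] sin_lipschitz[of Y "t / 2"] by linarith
  moreover have "(pi / (3 * N)) * (\<bar>y\<bar> - 3 * \<beta> / 2) \<le> \<bar>Y\<bar> / 3 - \<bar>t\<bar> / 2"
    using t N unfolding Y by (simp add: field_simps)
  ultimately have sin_lower: "(pi / (3 * N)) * max 0 (\<bar>y\<bar> - 3 * \<beta> / 2) \<le> \<bar>sin (Y - t / 2)\<bar>"
    by (simp add: max_def)
  have "(1 / (2 * N))\<^sup>2 * (max 0 (\<bar>y\<bar> - 3 * \<beta> / 2))\<^sup>2 \<le> ((pi / (3 * N)) * max 0 (\<bar>y\<bar> - 3 * \<beta> / 2))\<^sup>2"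
    unfolding power_mult_distrib[symmetric] using N pi_ge_two
    by (intro power_mono mult_right_mono) (auto simp: field_simps)
  also have "\<dots> \<le> \<bar>sin (Y - t / 2)\<bar>\<^sup>2"
    using sin_lower N by (intro power_mono) auto
  finally have sin_sq: "(max 0 (\<bar>y\<bar> - 3 * \<beta> / 2))\<^sup>2 / (4 * N\<^sup>2) \<le> (sin (Y - t / 2))\<^sup>2"
    by (simp add: power_divide power_mult_distrib)
  have "m0 / N \<le> 1 - \<rho>" using m0 N by (simp add: field_simps)
  then have gap: "m0\<^sup>2 / N\<^sup>2 \<le> (1 - \<rho>)\<^sup>2" using m0 N by (simp add: power_divide[symmetric] power_mono)
  have "(m0\<^sup>2 + (max 0 (\<bar>y\<bar> - 3 * \<beta> / 2))\<^sup>2 / 2) / N\<^sup>2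
      = m0\<^sup>2 / N\<^sup>2 + 2 * ((max 0 (\<bar>y\<bar> - 3 * \<beta> / 2))\<^sup>2 / (4 * N\<^sup>2))"
    using N by (simp add: field_simps)
  also have "\<dots> \<le> (1 - \<rho>)\<^sup>2 + 4 * \<rho> * (sin (Y - t / 2))\<^sup>2"
    using gap sin_sq r mult_right_mono[of 2 "4 * \<rho>" "(sin (Y - t / 2))\<^sup>2"] by simp
  also have "\<dots> = chord_sq \<rho> (2 * pi * y / N - t)" by (simp only: chord_sq_sin half)
  finally show ?thesis .
qed

(* The resulting weight attached to a node at lattice distance w; it decays like w^-2. *)
definition decay :: "real \<Rightarrow> real \<Rightarrow> real \<Rightarrow> real" where
  "decay m \<beta> w = 1 / (m\<^sup>2 + (max 0 (w - 3 * \<beta> / 2))\<^sup>2 / 2)"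

lemma decay_nonneg: "0 \<le> decay m \<beta> w"
  by (simp add: decay_def)

lemma decay_antimono:
  assumes "0 < m" "a \<le> b" shows "decay m \<beta> b \<le> decay m \<beta> a"
proof -
  have "(max 0 (a - 3 * \<beta> / 2))\<^sup>2 \<le> (max 0 (b - 3 * \<beta> / 2))\<^sup>2"
    using assms by (intro power_mono) auto
  then show ?thesis unfolding decay_def using assms
    by (intro divide_left_mono) (auto intro!: mult_pos_pos add_pos_nonneg)
qed

lemma summable_decay:
  assumes m: "0 < m" and \<beta>: "0 \<le> \<beta>"
  shows "summable (\<lambda>i::nat. decay m \<beta> (real i))"
proof (rule summable_comparison_test')
  show "summable (\<lambda>i::nat. 8 * inverse (real i ^ 2))"
    by (intro summable_mult inverse_power_summable) simp
  fix i :: nat assume i: "nat \<lceil>3 * \<beta>\<rceil> + 1 \<le> i"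
  then have "3 * \<beta> \<le> real i" "1 \<le> real i" by linarith+
  then have "(real i / 2)\<^sup>2 \<le> (max 0 (real i - 3 * \<beta> / 2))\<^sup>2" by (intro power_mono) auto
  then have "(real i)\<^sup>2 / 8 \<le> m\<^sup>2 + (max 0 (real i - 3 * \<beta> / 2))\<^sup>2 / 2"
    by (simp add: power_divide add_increasing)
  moreover have "0 < (real i)\<^sup>2 / 8" using \<open>1 \<le> real i\<close> by simp
  ultimately have "decay m \<beta> (real i) \<le> 1 / ((real i)\<^sup>2 / 8)"
    unfolding decay_def using m by (intro divide_left_mono) (auto intro!: mult_pos_pos add_pos_nonneg)
  then show "norm (decay m \<beta> (real i)) \<le> 8 * inverse (real i ^ 2)"
    using decay_nonneg[of m \<beta> "real i"] by (simp add: field_simps)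
qed

(* Summing an antitone nonnegative weight over a finite set of integers on one side of x:
   the shift m \<mapsto> m - \<lceil>x\<rceil> injects them into the naturals, below the full series. *)
lemma one_sided_lattice_sum:
  fixes G :: "real \<Rightarrow> real" and S :: "int set"
  assumes S: "finite S" "\<And>m. m \<in> S \<Longrightarrow> x \<le> of_int m"
    and anti: "\<And>a b. 0 \<le> a \<Longrightarrow> a \<le> b \<Longrightarrow> G b \<le> G a"
    and nonneg: "\<And>w. 0 \<le> G w"
    and summ: "summable (\<lambda>i::nat. G (real i))"
  shows "(\<Sum>m\<in>S. G (of_int m - x)) \<le> (\<Sum>i. G (real i))"
proof -
  define shift where "shift m = nat (m - \<lceil>x\<rceil>)" for m
  have above: "\<lceil>x\<rceil> \<le> m" if "m \<in> S" for m using S(2)[OF that] by (simp add: ceiling_le)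
  have "inj_on shift S"
  proof (rule inj_onI)
    fix a b assume "a \<in> S" "b \<in> S" "shift a = shift b"
    then show "a = b" using above[of a] above[of b] by (simp add: shift_def)
  qed
  have "(\<Sum>m\<in>S. G (of_int m - x)) \<le> (\<Sum>m\<in>S. G (real (shift m)))"
  proof (rule sum_mono)
    fix m assume "m \<in> S"
    then have "real (shift m) = of_int m - of_int \<lceil>x\<rceil>" using above by (simp add: shift_def)
    then show "G (of_int m - x) \<le> G (real (shift m))"
      using le_of_int_ceiling[of x] by (intro anti) auto
  qed
  also have "\<dots> = (\<Sum>i\<in>shift ` S. G (real i))" by (simp add: sum.reindex[OF \<open>inj_on shift S\<close>])
  also have "\<dots> \<le> (\<Sum>i. G (real i))" by (rule sum_le_suminf[OF summ]) (use S nonneg in auto)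
  finally show ?thesis .
qed

(* Two-sided version: at most twice the series, splitting at x and reflecting the left half. *)
lemma lattice_sum:
  fixes G :: "real \<Rightarrow> real" and S :: "int set"
  assumes S: "finite S"
    and anti: "\<And>a b. 0 \<le> a \<Longrightarrow> a \<le> b \<Longrightarrow> G b \<le> G a"
    and nonneg: "\<And>w. 0 \<le> G w"
    and summ: "summable (\<lambda>i::nat. G (real i))"
  shows "(\<Sum>m\<in>S. G \<bar>x - of_int m\<bar>) \<le> 2 * (\<Sum>i. G (real i))"
proof -
  define Sr where "Sr = {m\<in>S. x \<le> of_int m}"
  define Sl where "Sl = {m\<in>S. of_int m < x}"
  have "(\<Sum>m\<in>S. G \<bar>x - of_int m\<bar>) = (\<Sum>m\<in>Sr. G \<bar>x - of_int m\<bar>) + (\<Sum>m\<in>Sl. G \<bar>x - of_int m\<bar>)"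
    using S by (subst sum.union_disjoint[symmetric]) (auto simp: Sr_def Sl_def intro!: sum.cong)
  also have "(\<Sum>m\<in>Sr. G \<bar>x - of_int m\<bar>) = (\<Sum>m\<in>Sr. G (of_int m - x))"
    by (intro sum.cong) (auto simp: Sr_def)
  also have "(\<Sum>m\<in>Sl. G \<bar>x - of_int m\<bar>) = (\<Sum>m\<in>uminus ` Sl. G (of_int m - (- x)))"
    by (subst sum.reindex) (auto simp: Sl_def inj_on_def intro!: sum.cong)
  also have "(\<Sum>m\<in>Sr. G (of_int m - x)) \<le> (\<Sum>i. G (real i))"
    by (rule one_sided_lattice_sum[OF _ _ anti nonneg summ]) (use S in \<open>auto simp: Sr_def\<close>)
  also have "(\<Sum>m\<in>uminus ` Sl. G (of_int m - (- x))) \<le> (\<Sum>i. G (real i))"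
    by (rule one_sided_lattice_sum[OF _ _ anti nonneg summ]) (use S in \<open>auto simp: Sl_def\<close>)
  finally show ?thesis by simp
qed

definition nearest_rep :: "real \<Rightarrow> nat \<Rightarrow> nat \<Rightarrow> int" where
  "nearest_rep x N j = int j + int N * \<lfloor>(x - real j) / N + 1/2\<rfloor>"

lemma nearest_rep_close:
  assumes "0 < N" shows "\<bar>x - of_int (nearest_rep x N j)\<bar> \<le> real N / 2"
proof -
  define k where "k = \<lfloor>(x - real j) / N + 1/2\<rfloor>"
  have "\<bar>(x - real j) / N - of_int k\<bar> \<le> 1/2"
    unfolding k_def by linarith
  moreover have "x - of_int (nearest_rep x N j) = N * ((x - real j) / N - of_int k)"
    using assms by (simp add: nearest_rep_def k_def field_simps)
  ultimately show ?thesis using assms by (simp add: abs_mult)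
qed

lemma inj_on_nearest_rep: "inj_on (nearest_rep x N) {..<N}"
proof (rule inj_onI)
  fix i j assume "i \<in> {..<N}" "j \<in> {..<N}" "nearest_rep x N i = nearest_rep x N j"
  then have "nearest_rep x N i mod int N = nearest_rep x N j mod int N" "i < N" "j < N" by auto
  then show "i = j" by (simp add: nearest_rep_def)
qed

lemma nearest_rep_decay_sum:
  assumes "0 < m" "0 \<le> \<beta>"
  shows "(\<Sum>j=0..n. decay m \<beta> \<bar>x - of_int (nearest_rep x (Suc n) j)\<bar>) \<le> 2 * (\<Sum>i. decay m \<beta> (real i))"
proof -
  have "(\<Sum>j=0..n. decay m \<beta> \<bar>x - of_int (nearest_rep x (Suc n) j)\<bar>)
      = (\<Sum>r\<in>nearest_rep x (Suc n) ` {..<Suc n}. decay m \<beta> \<bar>x - of_int r\<bar>)"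
    by (subst sum.reindex[OF inj_on_nearest_rep]) (simp add: atLeast0AtMost lessThan_Suc_atMost)
  also have "\<dots> \<le> 2 * (\<Sum>i. decay m \<beta> (real i))"
    using assms by (intro lattice_sum) (auto simp: decay_antimono decay_nonneg summable_decay)
  finally show ?thesis .
qed

lemma prod_scaled_roots_of_unity:
  fixes \<rho> :: real and z :: complex and N :: nat
  assumes r: "0 < \<rho>" and N: "0 < N"
  shows "(\<Prod>k<N. z - of_real \<rho> * cis (2 * pi * real k / real N)) = z ^ N - of_real \<rho> ^ N"
proof -
  define c :: complex where "c = of_real \<rho> ^ N"
  have c0: "c \<noteq> 0" using r by (simp add: c_def)
  define p :: "complex poly" where "p = monom 1 N + [:-c:]"
  have poly_p: "poly p w = w ^ N - c" for w by (simp add: p_def poly_monom)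
  have deg: "degree p = N" unfolding p_def using N by (subst degree_add_eq_left) (auto simp: degree_monom_eq)
  have lc: "lead_coeff p = 1" unfolding deg unfolding p_def using N by (cases N) (auto simp: coeff_monom)
  have "rsquarefree p" unfolding rsquarefree_roots
  proof (intro allI notI)
    fix a assume a: "poly p a = 0 \<and> poly (pderiv p) a = 0"
    then have "of_nat N * a ^ (N - 1) = 0" by (simp add: p_def pderiv_add pderiv_monom poly_monom)
    then have "a = 0" using N by simp
    then show False using a c0 N by (simp add: poly_p zero_power)
  qed
  then have decomp: "smult (lead_coeff p) (\<Prod>w | poly p w = 0. [:-w, 1:]) = p"
    by (rule complex_poly_decompose_rsquarefree)
  have "poly p z = (\<Prod>w | poly p w = 0. z - w)"
    by (subst decomp[symmetric]) (simp add: lc poly_prod)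
  also have "{w. poly p w = 0} = {w. w ^ N = c}" by (simp add: poly_p)
  also have "(\<Prod>w\<in>{w. w ^ N = c}. z - w) = (\<Prod>k<N. z - of_real \<rho> * cis (2 * pi * real k / real N))"
  proof (rule prod.reindex_bij_betw[symmetric])
    have "bij_betw (\<lambda>w. of_real \<rho> * w) {w. w ^ N = 1} {w. w ^ N = c}"
    proof (rule bij_betwI[where g = "\<lambda>w. w / of_real \<rho>"])
      show "(\<lambda>w. of_real \<rho> * w) \<in> {w. w ^ N = 1} \<rightarrow> {w. w ^ N = c}"
        by (auto simp: c_def power_mult_distrib)
      show "(\<lambda>w. w / of_real \<rho>) \<in> {w. w ^ N = c} \<rightarrow> {w. w ^ N = 1}"
        using r by (auto simp: c_def power_divide)
    qed (use r in auto)
    then show "bij_betw (\<lambda>k. of_real \<rho> * cis (2 * pi * real k / real N)) {..<N} {w. w ^ N = c}"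
      using bij_betw_trans[OF bij_betw_roots_unity[OF N]] by (simp add: o_def)
  qed
  finally show ?thesis by (simp add: poly_p c_def)
qed

lemma rho_bounds: "0 < \<kappa> \<Longrightarrow> 1/2 \<le> rho \<kappa> n \<and> rho \<kappa> n < 1"
  by (auto simp: rho_def)

lemma rho_gap: "min (1/2) \<kappa> \<le> (real n + 1) * (1 - rho \<kappa> n)"
proof -
  have "1 - rho \<kappa> n = min (1/2) (\<kappa> / (real n + 1))" by (simp add: rho_def)
  then have "(real n + 1) * (1 - rho \<kappa> n) = min ((real n + 1) / 2) \<kappa>"
    by (simp add: min_mult_distrib_left)
  then show ?thesis by simp
qed

(* \<rho>^N stays uniformly below 1, since (1 - \<kappa>/N)^N \<le> e^-\<kappa>. *)
lemma rho_power_le: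
  assumes "0 < \<kappa>" shows "rho \<kappa> n ^ Suc n \<le> max (1/2) (exp (- \<kappa>))"
proof (cases "rho \<kappa> n = 1/2")
  case True
  have "(1/2::real) ^ Suc n \<le> 1/2" by (simp add: power_le_one)
  then have "rho \<kappa> n ^ Suc n \<le> 1/2" by (simp only: True)
  then show ?thesis by (rule max.coboundedI1)
next
  case False
  then have r: "rho \<kappa> n = 1 - \<kappa> / (real n + 1)" by (auto simp: rho_def max_def split: if_splits)
  have "rho \<kappa> n ^ Suc n \<le> exp (- \<kappa> / (real n + 1)) ^ Suc n"
    using rho_bounds[OF assms, of n] exp_ge_add_one_self[of "- \<kappa> / (real n + 1)"] r
    by (intro power_mono) auto
  also have "\<dots> = exp (real (Suc n) * (- \<kappa> / (real n + 1)))" by (rule exp_of_nat_mult[symmetric])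
  also have "real (Suc n) * (- \<kappa> / (real n + 1)) = - \<kappa>" by (simp add: add.commute)
  finally show ?thesis by simp
qed

lemma Pnod_unperturbed: "0 < \<kappa> \<Longrightarrow> Pnod \<kappa> 0 \<delta> n z = z ^ Suc n - of_real (rho \<kappa> n) ^ Suc n"
proof -
  assume "0 < \<kappa>"
  have exp_cis: "exp (of_real \<psi> * \<i>) = cis \<psi>" for \<psi> by (simp add: cis_conv_exp mult.commute)
  have "Pnod \<kappa> 0 \<delta> n z = (\<Prod>k<Suc n. z - of_real (rho \<kappa> n) * cis (2 * pi * real k / real (Suc n)))"
    unfolding Pnod_def exp_cis by (simp add: atLeast0AtMost lessThan_Suc_atMost[symmetric] add.commute)
  also have "\<dots> = z ^ Suc n - of_real (rho \<kappa> n) ^ Suc n"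
    using rho_bounds[OF \<open>0 < \<kappa>\<close>, of n] by (intro prod_scaled_roots_of_unity) auto
  finally show ?thesis .
qed

lemma ln_norm_Pnod_unperturbed_bound:
  assumes \<kappa>: "0 < \<kappa>" and z: "cmod z = 1"
  shows "\<bar>ln (cmod (Pnod \<kappa> 0 \<delta> n z))\<bar> \<le> ln 2 - ln (1 - max (1/2) (exp (- \<kappa>)))"
proof -
  define Q where "Q = max (1/2) (exp (- \<kappa>))"
  have Q: "Q < 1" using \<kappa> by (simp add: Q_def)
  have "0 \<le> rho \<kappa> n" using rho_bounds[OF \<kappa>, of n] by simp
  then have "cmod (of_real (rho \<kappa> n) ^ Suc n) = rho \<kappa> n ^ Suc n"
    by (simp only: norm_power norm_of_real abs_of_nonneg)
  then have "cmod (of_real (rho \<kappa> n) ^ Suc n) \<le> Q" using rho_power_le[OF \<kappa>] by (simp only: Q_def)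
  moreover have "cmod (z ^ Suc n) = 1" by (simp only: norm_power z power_one)
  ultimately have lower: "1 - Q \<le> cmod (Pnod \<kappa> 0 \<delta> n z)" and upper: "cmod (Pnod \<kappa> 0 \<delta> n z) \<le> 2"
    unfolding Pnod_unperturbed[OF \<kappa>]
    using norm_triangle_ineq2[of "z ^ Suc n" "of_real (rho \<kappa> n) ^ Suc n"]
      norm_triangle_ineq4[of "z ^ Suc n" "of_real (rho \<kappa> n) ^ Suc n"] Q by linarith+
  have "ln (1 - Q) \<le> ln (cmod (Pnod \<kappa> 0 \<delta> n z))" "ln (cmod (Pnod \<kappa> 0 \<delta> n z)) \<le> ln 2"
    using lower upper Q by (subst ln_le_cancel_iff; auto)+
  moreover have "ln (1 - Q) \<le> 0" "0 \<le> ln (2::real)" using Q by (simp_all add: Q_def)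
  ultimately show ?thesis unfolding Q_def[symmetric] abs_le_iff by linarith
qed

lemma ln_norm_Pnod:
  assumes \<kappa>: "0 < \<kappa>" and z: "cmod z = 1"
  shows "0 < cmod (Pnod \<kappa> a \<delta> n z)"
    and "ln (cmod (Pnod \<kappa> a \<delta> n z)) = (\<Sum>j=0..n. ln (chord_sq (rho \<kappa> n)
           (Arg z - 2 * pi * real j / (real n + 1) - a * (2 * pi * \<delta> n j / (real n + 1)))) / 2)"
proof -
  define g where "g j = chord_sq (rho \<kappa> n)
    (Arg z - 2 * pi * real j / (real n + 1) - a * (2 * pi * \<delta> n j / (real n + 1)))" for j
  have g: "0 < g j" for j unfolding g_def using rho_bounds[OF \<kappa>, of n] by (intro chord_sq_pos) auto
  have "z = cis (Arg z)" using rcis_cmod_Arg[of z] z by (simp add: rcis_def)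
  then have "cmod (z - of_real (rho \<kappa> n) *
      exp (of_real (2 * pi * (real j + a * \<delta> n j) / (real n + 1)) * \<i>)) = sqrt (g j)" for j
    by (metis (no_types, lifting) cis_conv_exp mult.commute norm_cis_diff g_def add_divide_distrib
        diff_diff_eq distrib_left times_divide_eq_right mult.assoc)
  then have norm: "cmod (Pnod \<kappa> a \<delta> n z) = (\<Prod>j=0..n. sqrt (g j))"
    unfolding Pnod_def prod_norm[symmetric] by simp
  show "0 < cmod (Pnod \<kappa> a \<delta> n z)" unfolding norm using g by (intro prod_pos) auto
  show "ln (cmod (Pnod \<kappa> a \<delta> n z)) = (\<Sum>j=0..n. ln (g j) / 2)"
  proof -
    have "g j \<noteq> 0" "0 \<le> g j" for j using g[of j] by auto
    then show ?thesis unfolding norm by (subst ln_prod) (auto simp: ln_sqrt)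
  qed
qed

(* Defect of a single node, in terms of the lattice distance y of z to the node: combines the
   log-chord defect bound with the chord lower bound; s^2 / L is at most \<pi>^2 decay |y|. *)
lemma node_defect_bound:
  fixes s y v :: real and k :: int
  assumes \<alpha>: "0 < \<alpha>" and \<kappa>: "0 < \<kappa>" and s: "\<bar>s\<bar> \<le> pi / (real n + 1)"
    and y: "\<bar>y\<bar> \<le> (real n + 1) / 2"
    and v: "v = 2 * pi * y / (real n + 1) + 2 * pi * of_int k"
  shows "\<bar>ln (chord_sq (rho \<kappa> n) (v - \<alpha> * s)) / 2 - \<alpha> * (ln (chord_sq (rho \<kappa> n) (v - s)) / 2)
           - (1 - \<alpha>) * (ln (chord_sq (rho \<kappa> n) (v - 0)) / 2)\<bar>
         \<le> 3 * (\<alpha>\<^sup>2 + \<alpha>) * pi\<^sup>2 * decay (min (1/2) \<kappa>) (max \<alpha> 1) \<bar>y\<bar>"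
proof -
  define N where "N = real n + 1"
  define m0 where "m0 = min (1/2) \<kappa>"
  define \<beta> where "\<beta> = max \<alpha> 1"
  define L where "L = (m0\<^sup>2 + (max 0 (\<bar>y\<bar> - 3 * \<beta> / 2))\<^sup>2 / 2) / N\<^sup>2"
  have N: "0 < N" by (simp add: N_def)
  have m0: "0 < m0" using \<kappa> by (simp add: m0_def)
  have L: "0 < L" unfolding L_def using m0 N by (intro divide_pos_pos add_pos_nonneg) auto
  have r: "1/2 \<le> rho \<kappa> n" "rho \<kappa> n < 1" using rho_bounds[OF \<kappa>] by auto
  have \<beta>: "0 \<le> \<beta>" by (simp add: \<beta>_def)
  have "L \<le> chord_sq (rho \<kappa> n) (v - t)" if t: "\<bar>t\<bar> \<le> max \<alpha> 1 * \<bar>s\<bar>" for t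
  proof -
    have "\<bar>t\<bar> \<le> \<beta> * pi / N"
      using t mult_left_mono[OF s \<beta>] by (simp add: \<beta>_def N_def)
    then have "L \<le> chord_sq (rho \<kappa> n) (2 * pi * y / N - t)"
      unfolding L_def using chord_sq_lattice_lower[OF r N] rho_gap[of \<kappa> n] m0 y
      by (simp add: N_def m0_def)
    also have "\<dots> = chord_sq (rho \<kappa> n) (v - t)"
      using chord_sq_periodic[of "rho \<kappa> n" "2 * pi * y / N - t" k] by (simp add: v N_def algebra_simps)
    finally show ?thesis .
  qed
  from log_chord_defect_bound[OF _ r(2) \<alpha> L this] r
  have defect: "\<bar>ln (chord_sq (rho \<kappa> n) (v - \<alpha> * s)) / 2 - \<alpha> * (ln (chord_sq (rho \<kappa> n) (v - s)) / 2)
           - (1 - \<alpha>) * (ln (chord_sq (rho \<kappa> n) (v - 0)) / 2)\<bar> \<le> 3 * (\<alpha>\<^sup>2 + \<alpha>) * (s\<^sup>2 / L)"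
    by simp
  have "\<bar>s\<bar> \<le> pi / N" using s by (simp add: N_def)
  then have "\<bar>s * N\<bar> \<le> pi" using N by (simp add: abs_mult field_simps)
  then have "(s * N)\<^sup>2 \<le> pi\<^sup>2" by (simp add: power2_le_iff_abs_le)
  moreover have "s\<^sup>2 / L = (s * N)\<^sup>2 * decay m0 \<beta> \<bar>y\<bar>"
    using N by (simp add: L_def decay_def power_mult_distrib)
  ultimately have "s\<^sup>2 / L \<le> pi\<^sup>2 * decay m0 \<beta> \<bar>y\<bar>"
    using decay_nonneg[of m0 \<beta> "\<bar>y\<bar>"] by (simp add: mult_right_mono)
  then have "3 * (\<alpha>\<^sup>2 + \<alpha>) * (s\<^sup>2 / L) \<le> 3 * (\<alpha>\<^sup>2 + \<alpha>) * (pi\<^sup>2 * decay m0 \<beta> \<bar>y\<bar>)"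
    using \<alpha> by (intro mult_left_mono) auto
  with defect show ?thesis by (simp add: m0_def \<beta>_def mult.assoc)
qed

lemma log_ratio_bound:
  assumes \<alpha>: "0 < \<alpha>" and \<kappa>: "0 < \<kappa>"
    and \<delta>: "\<And>n j. j \<le> n \<Longrightarrow> \<bar>\<delta> n j\<bar> \<le> 1/2" and z: "cmod z = 1"
  shows "\<bar>ln (cmod (Pnod \<kappa> \<alpha> \<delta> n z)) - \<alpha> * ln (cmod (Pnod \<kappa> 1 \<delta> n z))\<bar>
         \<le> 6 * (\<alpha>\<^sup>2 + \<alpha>) * pi\<^sup>2 * (\<Sum>i. decay (min (1/2) \<kappa>) (max \<alpha> 1) (real i))
           + \<bar>1 - \<alpha>\<bar> * (ln 2 - ln (1 - max (1/2) (exp (- \<kappa>))))"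
proof -
  define N where "N = real n + 1"
  define x where "x = N * Arg z / (2 * pi)"
  define s where "s j = 2 * pi * \<delta> n j / N" for j
  define v where "v j = Arg z - 2 * pi * real j / N" for j
  define F where "F j t = ln (chord_sq (rho \<kappa> n) (v j - t)) / 2" for j t
  define E where "E j = F j (\<alpha> * s j) - \<alpha> * F j (s j) - (1 - \<alpha>) * F j 0" for j
  define G where "G = decay (min (1/2) \<kappa>) (max \<alpha> 1)"
  define m where "m = nearest_rep x (Suc n)"
  have N: "0 < N" by (simp add: N_def)
  have ln_P: "ln (cmod (Pnod \<kappa> a \<delta> n z)) = (\<Sum>j=0..n. F j (a * s j))" for a
    unfolding ln_norm_Pnod(2)[OF \<kappa> z] by (simp add: F_def v_def s_def N_def)
  have decompose: "ln (cmod (Pnod \<kappa> \<alpha> \<delta> n z)) - \<alpha> * ln (cmod (Pnod \<kappa> 1 \<delta> n z))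
      = (\<Sum>j=0..n. E j) + (1 - \<alpha>) * ln (cmod (Pnod \<kappa> 0 \<delta> n z))"
    unfolding ln_P E_def by (simp add: sum_subtractf sum_distrib_left)
  have E: "\<bar>E j\<bar> \<le> 3 * (\<alpha>\<^sup>2 + \<alpha>) * pi\<^sup>2 * G \<bar>x - of_int (m j)\<bar>" if "j \<le> n" for j
  proof -
    define k where "k = \<lfloor>(x - real j) / real (Suc n) + 1/2\<rfloor>"
    have "of_int (m j) = real j + N * of_int k" by (simp add: m_def nearest_rep_def k_def N_def)
    then have "v j = 2 * pi * (x - of_int (m j)) / N + 2 * pi * of_int k"
      using N by (simp add: v_def x_def field_simps)
    moreover have "\<bar>s j\<bar> \<le> pi / N"
    proof -
      have "\<bar>s j\<bar> = 2 * pi * \<bar>\<delta> n j\<bar> / N" using N by (simp add: s_def abs_mult)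
      also have "\<dots> \<le> 2 * pi * (1/2) / N" using \<delta>[OF that] N by (intro divide_right_mono mult_left_mono) auto
      finally show ?thesis by simp
    qed
    moreover have "\<bar>x - of_int (m j)\<bar> \<le> N / 2"
      using nearest_rep_close[of "Suc n" x j] by (simp add: m_def N_def)
    ultimately show ?thesis
      unfolding E_def F_def G_def N_def by (intro node_defect_bound[OF \<alpha> \<kappa>]) auto
  qed
  have lattice: "(\<Sum>j=0..n. G \<bar>x - of_int (m j)\<bar>) \<le> 2 * (\<Sum>i. G (real i))"
    unfolding G_def m_def using \<kappa> by (intro nearest_rep_decay_sum) auto
  have "\<bar>\<Sum>j=0..n. E j\<bar> \<le> (\<Sum>j=0..n. 3 * (\<alpha>\<^sup>2 + \<alpha>) * pi\<^sup>2 * G \<bar>x - of_int (m j)\<bar>)"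
    using E by (intro order_trans[OF sum_abs] sum_mono) auto
  also have "\<dots> \<le> 3 * (\<alpha>\<^sup>2 + \<alpha>) * pi\<^sup>2 * (2 * (\<Sum>i. G (real i)))"
    unfolding sum_distrib_left[symmetric] using lattice \<alpha> by (intro mult_left_mono) auto
  also have "\<dots> = 6 * (\<alpha>\<^sup>2 + \<alpha>) * pi\<^sup>2 * (\<Sum>i. G (real i))" by simp
  finally have "\<bar>\<Sum>j=0..n. E j\<bar> \<le> 6 * (\<alpha>\<^sup>2 + \<alpha>) * pi\<^sup>2 * (\<Sum>i. G (real i))" .
  moreover have "\<bar>(1 - \<alpha>) * ln (cmod (Pnod \<kappa> 0 \<delta> n z))\<bar>
      \<le> \<bar>1 - \<alpha>\<bar> * (ln 2 - ln (1 - max (1/2) (exp (- \<kappa>))))"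
    unfolding abs_mult using ln_norm_Pnod_unperturbed_bound[OF \<kappa> z] by (intro mult_left_mono) auto
  ultimately show ?thesis unfolding decompose G_def by linarith
qed

theorem mainTheorem2:
  fixes \<alpha> \<kappa> :: real and \<delta> :: "nat \<Rightarrow> nat \<Rightarrow> real"
  assumes "\<alpha> > 0" and "\<kappa> > 0"
    and "\<exists>M < 1/2. \<forall>n j. j \<le> n \<longrightarrow> \<bar>\<delta> n j\<bar> \<le> M"
  shows "\<exists>c C. 0 < c \<and> c \<le> C \<and>
           (\<forall>n z. cmod z = 1 \<longrightarrow> c \<le> Rfun \<alpha> \<kappa> \<delta> n z \<and> Rfun \<alpha> \<kappa> \<delta> n z \<le> C)"
proof -
  have \<delta>: "\<And>n j. j \<le> n \<Longrightarrow> \<bar>\<delta> n j\<bar> \<le> 1/2" using assms(3) by force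
  define K where "K = 6 * (\<alpha>\<^sup>2 + \<alpha>) * pi\<^sup>2 * (\<Sum>i. decay (min (1/2) \<kappa>) (max \<alpha> 1) (real i))
           + \<bar>1 - \<alpha>\<bar> * (ln 2 - ln (1 - max (1/2) (exp (- \<kappa>))))"
  have bound: "\<bar>ln (cmod (Pnod \<kappa> \<alpha> \<delta> n z)) - \<alpha> * ln (cmod (Pnod \<kappa> 1 \<delta> n z))\<bar> \<le> K"
    if "cmod z = 1" for n z
    unfolding K_def using assms(1,2) \<delta> that by (rule log_ratio_bound)
  have R: "Rfun \<alpha> \<kappa> \<delta> n z = exp (ln (cmod (Pnod \<kappa> \<alpha> \<delta> n z)) - \<alpha> * ln (cmod (Pnod \<kappa> 1 \<delta> n z)))"
    if "cmod z = 1" for n z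
    using ln_norm_Pnod(1)[OF assms(2) that] by (simp add: Rfun_def powr_def exp_diff)
  have "0 \<le> K" using bound[where n = 0 and z = 1] by simp
  show ?thesis
  proof (intro exI conjI allI impI)
    show "0 < exp (- K)" "exp (- K) \<le> exp K" using \<open>0 \<le> K\<close> by simp_all
    fix n and z :: complex assume z: "cmod z = 1"
    from bound[of z n, OF z] show "exp (- K) \<le> Rfun \<alpha> \<kappa> \<delta> n z" "Rfun \<alpha> \<kappa> \<delta> n z \<le> exp K"
      unfolding R[OF z] by (simp_all add: abs_le_iff)
  qed
qed

end
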